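(* Let $b_n = \sum_{k=0}^n B_{n-k}^{(-k)}$ for $n\ge 0$. Then $b_0=1$ and for all $n\ge 0$, \[ 3b_{n+1} = 2b_n + \sum_{k=0}^n \binom{n+1}{k} b_k + 3. \]
   Context: For an integer $k$, $\mathrm{Li}_k(z)=\sum_{m\ge1} z^m/m^k$ (for $k\le 0$ this is a rational function of $z$). The poly-Bernoulli numbers $B_n^{(k)}\in\mathbb{Q}$ are defined by $\sum_{n\ge0} B_n^{(k)} \frac{t^n}{n!} = \frac{\mathrm{Li}_k(1-e^{-t})}{1-e^{-t}}$. *)

theory Defs
  imports "HOL-Computational_Algebra.Formal_Power_Series"
begin

text \<open>The formal power series Li_k(z)/z = sum_{m>=0} z^m/(m+1)^k (for any integer k).\<close>
definition Li_div_z :: "int \<Rightarrow> rat fps" where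
  "Li_div_z k = Abs_fps (\<lambda>m. inverse ((of_nat (m + 1) :: rat) powi k))"

text \<open>Poly-Bernoulli numbers: sum_n B_n^(k) t^n/n! = Li_k(1-e^{-t})/(1-e^{-t}),
  i.e. (Li_k(z)/z) composed with z = 1 - e^{-t} (which has zero constant term).\<close>
definition poly_bernoulli :: "int \<Rightarrow> nat \<Rightarrow> rat" where
  "poly_bernoulli k n = fact n * fps_nth (Li_div_z k oo (1 - fps_exp (-1))) n"

definition b_seq :: "nat \<Rightarrow> rat" where
  "b_seq n = (\<Sum>k=0..n. poly_bernoulli (- int k) (n - k))"

end

theory Submission
  imports Defs
begin

text \<open>
  With U = 1 - e^(-t), the ordinary generating function of n! [t^n] U^m is
  m! x^m / ((1 + x)(1 + 2x)...(1 + mx)); summing the definition of b_n over k therefore turns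
  the ordinary generating function of b_n into the sum over m of
  A_m = m! x^m / ((1 - (m+1)x)(1 + x)...(1 + mx)).
  The binomial transform T F = F(x/(1-x)) / (1-x) maps such a quotient of products of linear
  factors to another one, and comparing numerators gives the telescoping identity
  4 A_m - 2x A_m - T A_m = R_m - R_(m+1) for
  R_m = m! x^m (3 - (m+3)x) / ((1-x)(1-(m+1)x)(1 + x)...(1 + (m-1)x)).
  Since R_0 = 3/(1-x) and R_m = O(x^m), the coefficient of x^(n+1) of the sum over m is
  4 b_(n+1) - 2 b_n - sum_(k<=n+1) C(n+1,k) b_k = 3.
\<close>

unbundle fps_syntax

lemma one_minus_fps_X_neq_0: "(1 - fps_X :: 'a::ring_1 fps) \<noteq> 0"
proof
  assume "1 - fps_X = (0 :: 'a fps)"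
  then have "(1 - fps_X :: 'a fps) $ 0 = 0" by simp
  then show False by simp
qed

lemma fps_inverse_one_minus_const_X_nth:
  "inverse (1 - fps_const c * fps_X :: 'a::field fps) $ n = c ^ n"
proof -
  have "(1 - fps_const c * fps_X) * Abs_fps (\<lambda>n. c ^ n) = (1 :: 'a fps)"
    by (auto simp: fps_eq_iff algebra_simps power_eq_if)
  from fps_inverse_unique[OF this] show ?thesis by simp
qed

lemma fps_inverse_one_minus_X_nth: "inverse (1 - fps_X :: 'a::field fps) $ n = 1"
  using fps_inverse_one_minus_const_X_nth[of 1 n] by simp

lemma fps_inverse_one_minus_X_power_nth:
  "(inverse (1 - fps_X :: 'a::field fps) ^ Suc k) $ n = of_nat ((k + n) choose n)"
proof (induction k arbitrary: n)
  case 0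
  show ?case by (simp add: fps_inverse_one_minus_X_nth)
next
  case (Suc k)
  have "(inverse (1 - fps_X :: 'a fps) ^ Suc (Suc k)) $ n = (\<Sum>j\<le>n. of_nat ((k + j) choose j))"
    by (simp add: power_Suc2[of _ "Suc k"] fps_mult_nth Suc.IH fps_inverse_one_minus_X_nth
        atLeast0AtMost del: power_Suc)
  also have "\<dots> = of_nat (Suc (k + n) choose n)"
    by (simp only: of_nat_sum[symmetric] sum_choose_lower)
  finally show ?case by simp
qed

lemma fps_compose_mult_nth:
  fixes a b c :: "'a::comm_ring_1 fps"
  assumes "b $ 0 = 0"
  shows "((a oo b) * c) $ n = (\<Sum>i=0..n. a $ i * (b ^ i * c) $ n)"
proof -
  have "((a oo b) * c) $ n = (\<Sum>j=0..n. \<Sum>i=0..n. a $ i * (b ^ i) $ j * c $ (n - j))"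
    unfolding fps_mult_nth fps_compose_nth sum_distrib_right
  proof (rule sum.cong)
    fix j assume "j \<in> {0..n}"
    then show "(\<Sum>i=0..j. a $ i * (b ^ i) $ j * c $ (n - j)) =
        (\<Sum>i=0..n. a $ i * (b ^ i) $ j * c $ (n - j))"
      by (intro sum.mono_neutral_left) (auto simp: startsby_zero_power_prefix[OF assms])
  qed simp
  also have "\<dots> = (\<Sum>i=0..n. a $ i * (b ^ i * c) $ n)"
    by (subst sum.swap) (simp add: fps_mult_nth sum_distrib_left mult.assoc)
  finally show ?thesis .
qed

lemma fact_compose: "(fact k :: 'a::field_char_0 fps) oo b = fact k"
  by (metis fps_const_compose fps_of_nat of_nat_fact)

lemma fps_X_over_one_minus_X_nth_0: "(fps_X / (1 - fps_X :: 'a::field fps)) $ 0 = 0"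
  by (simp add: fps_divide_unit)

lemma fps_X_over_one_minus_X_mult: "fps_X / (1 - fps_X) * (1 - fps_X) = (fps_X :: 'a::field fps)"
  by (simp add: fps_divide_unit mult.assoc inverse_mult_eq_1)

lemma fps_X_over_one_minus_X_power_mult_nth:
  "((fps_X / (1 - fps_X)) ^ i * inverse (1 - fps_X)) $ n = (of_nat (n choose i) :: 'a::field)"
proof -
  have "(fps_X / (1 - fps_X)) ^ i * inverse (1 - fps_X) = fps_X ^ i * inverse (1 - fps_X :: 'a fps) ^ Suc i"
    by (simp add: fps_divide_unit power_mult_distrib mult_ac)
  then show ?thesis
    by (cases "i \<le> n") (auto simp: fps_X_power_mult_nth fps_inverse_one_minus_X_power_nth
        binomial_symmetric[of i n] binomial_eq_0 simp del: power_Suc)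
qed

lemma one_minus_X_mult_linear_compose:
  "(1 - fps_X) * ((1 + fps_const c * fps_X) oo (fps_X / (1 - fps_X))) =
     1 + fps_const (c - 1) * (fps_X :: 'a::field fps)"
proof -
  have "(1 - fps_X) * ((1 + fps_const c * fps_X) oo (fps_X / (1 - fps_X))) =
      (1 - fps_X) * (1 + fps_const c * (fps_X / (1 - fps_X :: 'a fps)))"
    by (simp add: fps_compose_add_distrib fps_divide_unit flip: fps_const_mult_apply_left)
  also have "\<dots> = (1 - fps_X) + fps_const c * (fps_X / (1 - fps_X) * (1 - fps_X))"
    by (simp add: algebra_simps)
  also have "\<dots> = 1 + fps_const (c - 1) * fps_X"
    by (simp only: fps_X_over_one_minus_X_mult) (simp add: algebra_simps flip: fps_const_sub)
  finally show ?thesis .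
qed

definition fps_binomial_transform :: "'a::field fps \<Rightarrow> 'a fps" where
  "fps_binomial_transform F = (F oo (fps_X / (1 - fps_X))) / (1 - fps_X)"

lemma fps_binomial_transform_nth:
  "fps_binomial_transform F $ n = (\<Sum>i=0..n. of_nat (n choose i) * F $ i)"
proof -
  have "fps_binomial_transform F = (F oo (fps_X / (1 - fps_X))) * inverse (1 - fps_X)"
    by (simp add: fps_binomial_transform_def fps_divide_unit)
  then have "fps_binomial_transform F $ n = (\<Sum>i=0..n. F $ i * of_nat (n choose i))"
    by (simp only: fps_compose_mult_nth[OF fps_X_over_one_minus_X_nth_0]
        fps_X_over_one_minus_X_power_mult_nth)
  then show ?thesis
    by (simp add: mult.commute)
qed

lemma fps_binomial_transform_mult_one_minus_X:
  "fps_binomial_transform F * (1 - fps_X) = F oo (fps_X / (1 - fps_X))"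
  by (simp add: fps_binomial_transform_def fps_divide_unit mult.assoc inverse_mult_eq_1)

definition one_minus_exp_neg :: "rat fps" where
  "one_minus_exp_neg = 1 - fps_exp (-1)"

text \<open>Coefficient \<open>n\<close> of \<open>stirling_ogf m\<close> is \<open>n! [t^n] (1 - e^{-t})^m = (-1)^(n-m) m! S(n,m)\<close>.\<close>
definition stirling_ogf :: "nat \<Rightarrow> rat fps" where
  "stirling_ogf m = Abs_fps (\<lambda>n. fact n * (one_minus_exp_neg ^ m) $ n)"

definition stirling_denom :: "nat \<Rightarrow> rat fps" where
  "stirling_denom m = (\<Prod>i<m. 1 + of_nat i * fps_X)"

lemma stirling_denom_Suc: "stirling_denom (Suc m) = stirling_denom m * (1 + of_nat m * fps_X)"
  by (simp add: stirling_denom_def)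

lemma stirling_denom_nth_0: "stirling_denom m $ 0 = 1"
  by (induction m) (simp_all add: stirling_denom_Suc stirling_denom_def)

lemma one_minus_exp_neg_nth_0: "one_minus_exp_neg $ 0 = 0"
  by (simp add: one_minus_exp_neg_def)

lemma fps_deriv_one_minus_exp_neg: "fps_deriv one_minus_exp_neg = 1 - one_minus_exp_neg"
  by (simp add: one_minus_exp_neg_def fps_eq_iff)

lemma stirling_ogf_0: "stirling_ogf 0 = 1"
  by (auto simp: stirling_ogf_def fps_eq_iff)

lemma stirling_ogf_nth_below:
  assumes "n < m"
  shows "stirling_ogf m $ n = 0"
proof -
  have "one_minus_exp_neg $ 1 \<noteq> 0"
    by (simp add: one_minus_exp_neg_def)
  then have "subdegree one_minus_exp_neg = 1"
    by (intro subdegreeI) (auto simp: one_minus_exp_neg_nth_0)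
  with assms show ?thesis
    by (simp add: stirling_ogf_def fps_pow_nth_below_subdegree)
qed

text \<open>Differentiate \<open>U^(m+1)\<close> for \<open>U = one_minus_exp_neg\<close>, using \<open>U' = 1 - U\<close>.\<close>
lemma stirling_ogf_Suc:
  "stirling_ogf (Suc m) * (1 + of_nat (Suc m) * fps_X) = of_nat (Suc m) * fps_X * stirling_ogf m"
proof -
  let ?U = one_minus_exp_neg
  have deriv: "fps_deriv (?U ^ Suc m) = fps_const (of_nat (Suc m)) * (?U ^ m - ?U ^ Suc m)"
    by (simp only: fps_deriv_power fps_deriv_one_minus_exp_neg diff_Suc_1) (simp add: algebra_simps)
  have coeff: "fact (Suc a) * (?U ^ Suc m) $ Suc a =
      of_nat (Suc m) * (fact a * (?U ^ m) $ a) - of_nat (Suc m) * (fact a * (?U ^ Suc m) $ a)" for a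
  proof -
    have "fact (Suc a) * (?U ^ Suc m) $ Suc a = fact a * fps_deriv (?U ^ Suc m) $ a"
      by (simp add: algebra_simps del: power_Suc)
    then show ?thesis
      by (simp only: deriv) (simp add: algebra_simps del: power_Suc of_nat_Suc)
  qed
  show ?thesis
  proof (rule fps_ext)
    fix n
    show "(stirling_ogf (Suc m) * (1 + of_nat (Suc m) * fps_X)) $ n =
        (of_nat (Suc m) * fps_X * stirling_ogf m) $ n"
    proof (cases n)
      case 0
      then show ?thesis by (simp add: stirling_ogf_def one_minus_exp_neg_nth_0)
    next
      case (Suc a)
      show ?thesis
        using coeff[of a] unfolding Suc by (simp add: stirling_ogf_def algebra_simps fps_of_nat)
    qed
  qed
qed

lemma stirling_ogf_mult_denom: "stirling_ogf m * stirling_denom (Suc m) = fact m * fps_X ^ m"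
proof (induction m)
  case 0
  then show ?case by (simp add: stirling_ogf_0 stirling_denom_def)
next
  case (Suc m)
  have "stirling_ogf (Suc m) * stirling_denom (Suc (Suc m)) =
      (stirling_ogf (Suc m) * (1 + of_nat (Suc m) * fps_X)) * stirling_denom (Suc m)"
    by (simp only: stirling_denom_Suc[of "Suc m"] mult_ac)
  also have "\<dots> = of_nat (Suc m) * fps_X * (stirling_ogf m * stirling_denom (Suc m))"
    unfolding stirling_ogf_Suc by (simp only: mult_ac)
  also have "\<dots> = fact (Suc m) * fps_X ^ Suc m"
    by (simp only: Suc.IH fact_Suc power_Suc mult_ac)
  finally show ?case .
qed

lemma poly_bernoulli_neg:
  "poly_bernoulli (- int k) n = (\<Sum>m=0..n. of_nat (Suc m) ^ k * stirling_ogf m $ n)"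
  unfolding poly_bernoulli_def fps_compose_nth sum_distrib_left one_minus_exp_neg_def[symmetric]
  by (rule sum.cong) (simp_all add: Li_div_z_def stirling_ogf_def power_int_minus mult_ac)

definition b_summand :: "nat \<Rightarrow> rat fps" where
  "b_summand m = stirling_ogf m * inverse (1 - of_nat (Suc m) * fps_X)"

lemma b_summand_nth: "b_summand m $ n = (\<Sum>a=0..n. stirling_ogf m $ a * of_nat (Suc m) ^ (n - a))"
  unfolding b_summand_def fps_mult_nth
  by (simp only: fps_inverse_one_minus_const_X_nth[of "of_nat (Suc m)", unfolded fps_of_nat])

lemma b_summand_mult_denom:
  "b_summand m * ((1 - of_nat (Suc m) * fps_X) * stirling_denom (Suc m)) = fact m * fps_X ^ m"
proof -
  have "b_summand m * ((1 - of_nat (Suc m) * fps_X) * stirling_denom (Suc m)) =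
      stirling_ogf m * stirling_denom (Suc m) *
      (inverse (1 - of_nat (Suc m) * fps_X) * (1 - of_nat (Suc m) * fps_X))"
    by (simp only: b_summand_def mult_ac)
  also have "inverse (1 - of_nat (Suc m) * fps_X) * (1 - of_nat (Suc m) * fps_X :: rat fps) = 1"
    by (rule inverse_mult_eq_1) simp
  finally show ?thesis
    by (simp add: stirling_ogf_mult_denom)
qed

lemma b_seq_eq_sum_b_summand:
  assumes "n \<le> N"
  shows "b_seq n = (\<Sum>m=0..N. b_summand m $ n)"
proof -
  have "b_seq n = (\<Sum>k=0..n. \<Sum>m=0..n-k. of_nat (Suc m) ^ k * stirling_ogf m $ (n - k))"
    unfolding b_seq_def poly_bernoulli_neg ..
  also have "\<dots> = (\<Sum>a=0..n. \<Sum>m=0..a. of_nat (Suc m) ^ (n - a) * stirling_ogf m $ a)"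
    by (subst sum.atLeastAtMost_rev) (auto intro: sum.cong)
  also have "\<dots> = (\<Sum>a=0..n. \<Sum>m=0..N. of_nat (Suc m) ^ (n - a) * stirling_ogf m $ a)"
    using assms by (intro sum.cong sum.mono_neutral_left) (auto simp: stirling_ogf_nth_below)
  also have "\<dots> = (\<Sum>m=0..N. b_summand m $ n)"
    by (subst sum.swap) (simp add: b_summand_nth mult_ac)
  finally show ?thesis .
qed

lemma stirling_denom_compose:
  "(1 - fps_X) ^ Suc m * (stirling_denom (Suc m) oo (fps_X / (1 - fps_X))) = (1 - fps_X) * stirling_denom m"
proof -
  let ?Y = "fps_X / (1 - fps_X) :: rat fps"
  note Y0 = fps_X_over_one_minus_X_nth_0[where 'a=rat]
  have denom: "stirling_denom k = (\<Prod>i<k. 1 + fps_const (of_nat i) * fps_X)" for k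
    by (simp add: stirling_denom_def fps_of_nat)
  have "(1 - fps_X) ^ Suc m * (stirling_denom (Suc m) oo ?Y) =
      (\<Prod>i<Suc m. (1 - fps_X) * ((1 + fps_const (of_nat i) * fps_X) oo ?Y))"
    by (simp only: denom fps_compose_prod_distrib[OF Y0] prod.distrib prod_constant card_lessThan)
  also have "\<dots> = (\<Prod>i<Suc m. 1 + fps_const (of_nat i - 1) * fps_X)"
    by (simp only: one_minus_X_mult_linear_compose)
  also have "\<dots> = (1 + fps_const (of_nat 0 - 1) * fps_X) * (\<Prod>i<m. 1 + fps_const (of_nat (Suc i) - 1) * fps_X)"
    by (simp only: prod.lessThan_Suc_shift)
  also have "1 + fps_const (of_nat 0 - 1) * fps_X = (1 - fps_X :: rat fps)"
    by (simp add: fps_eq_iff)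
  also have "(\<Prod>i<m. 1 + fps_const (of_nat (Suc i) - 1) * fps_X) = stirling_denom m"
    by (simp add: denom)
  finally show ?thesis .
qed

lemma binomial_transform_b_summand_mult_denom:
  "fps_binomial_transform (b_summand m) * ((1 - of_nat (Suc (Suc m)) * fps_X) * stirling_denom m) =
     fact m * fps_X ^ m"
proof -
  let ?Y = "fps_X / (1 - fps_X) :: rat fps"
  let ?T = "fps_binomial_transform (b_summand m)"
  note Y0 = fps_X_over_one_minus_X_nth_0[where 'a=rat]
  have composed: "(b_summand m oo ?Y) * ((1 - of_nat (Suc m) * fps_X) oo ?Y) * (stirling_denom (Suc m) oo ?Y) =
      fact m * ?Y ^ m"
    using arg_cong[OF b_summand_mult_denom, of "\<lambda>f. f oo ?Y"]
    by (simp only: fps_compose_mult_distrib[OF Y0] fps_compose_power[OF Y0, symmetric]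
        fps_X_fps_compose_startby0[OF Y0] mult.assoc fact_compose)
  have linear: "(1 - fps_X) * ((1 - of_nat (Suc m) * fps_X) oo ?Y) = 1 - of_nat (Suc (Suc m)) * fps_X"
  proof -
    have "1 - of_nat (Suc m) * fps_X = 1 + fps_const (- of_nat (Suc m)) * (fps_X :: rat fps)"
      by (simp only: fps_const_neg[symmetric] fps_of_nat) (simp add: algebra_simps)
    moreover have "fps_const (- of_nat (Suc m) - 1) = - (of_nat (Suc (Suc m)) :: rat fps)"
      by (simp only: fps_of_nat[symmetric] fps_const_neg) simp
    ultimately show ?thesis
      by (simp only: one_minus_X_mult_linear_compose) (simp add: algebra_simps)
  qed
  have "(?T * ((1 - of_nat (Suc (Suc m)) * fps_X) * stirling_denom m)) * (1 - fps_X) ^ 2 =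
      (?T * (1 - fps_X)) * ((1 - fps_X) * ((1 - of_nat (Suc m) * fps_X) oo ?Y)) *
      ((1 - fps_X) ^ Suc m * (stirling_denom (Suc m) oo ?Y))"
    unfolding linear stirling_denom_compose by (simp only: power2_eq_square mult_ac)
  also have "\<dots> = ((b_summand m oo ?Y) * ((1 - of_nat (Suc m) * fps_X) oo ?Y) * (stirling_denom (Suc m) oo ?Y)) *
      ((1 - fps_X) ^ m * (1 - fps_X) ^ 2)"
    unfolding fps_binomial_transform_mult_one_minus_X by (simp only: power_Suc power2_eq_square mult_ac)
  also have "\<dots> = fact m * (?Y * (1 - fps_X)) ^ m * (1 - fps_X) ^ 2"
    unfolding composed power_mult_distrib by (simp only: mult_ac)
  also have "\<dots> = (fact m * fps_X ^ m) * (1 - fps_X) ^ 2"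
    by (simp only: fps_X_over_one_minus_X_mult)
  finally show ?thesis
    by (simp add: one_minus_fps_X_neq_0)
qed

definition telescope_term :: "nat \<Rightarrow> rat fps" where
  "telescope_term M = fact M * fps_X ^ M * (3 - (of_nat M + 3) * fps_X) *
     inverse ((1 - fps_X) * (1 - of_nat (Suc M) * fps_X) * stirling_denom M)"

lemma telescope_term_mult_denom:
  "telescope_term M * ((1 - fps_X) * (1 - of_nat (Suc M) * fps_X) * stirling_denom M) =
     fact M * fps_X ^ M * (3 - (of_nat M + 3) * fps_X)"
proof -
  have "inverse ((1 - fps_X) * (1 - of_nat (Suc M) * fps_X) * stirling_denom M) *
      ((1 - fps_X) * (1 - of_nat (Suc M) * fps_X) * stirling_denom M) = 1"
    by (rule inverse_mult_eq_1) (simp add: stirling_denom_nth_0)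
  then show ?thesis
    unfolding telescope_term_def by (simp only: mult.assoc) simp
qed

lemma telescope_term_diff:
  "telescope_term M - telescope_term (Suc M) =
     4 * b_summand M - 2 * fps_X * b_summand M - fps_binomial_transform (b_summand M)"
proof -
  define L where "L = (1 - fps_X) * (1 - of_nat (Suc M) * fps_X) * (1 - of_nat (Suc (Suc M)) * fps_X) *
    stirling_denom M * (1 + of_nat M * fps_X)"
  have "L $ 0 = 1"
    by (simp add: L_def stirling_denom_nth_0)
  then have "L \<noteq> 0"
    by auto
  have "telescope_term M * L =
      (telescope_term M * ((1 - fps_X) * (1 - of_nat (Suc M) * fps_X) * stirling_denom M)) *
      ((1 - of_nat (Suc (Suc M)) * fps_X) * (1 + of_nat M * fps_X))"
    by (simp only: L_def mult_ac)
  note R0 = this[unfolded telescope_term_mult_denom]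
  have "telescope_term (Suc M) * L =
      (telescope_term (Suc M) * ((1 - fps_X) * (1 - of_nat (Suc (Suc M)) * fps_X) * stirling_denom (Suc M))) *
      (1 - of_nat (Suc M) * fps_X)"
    by (simp only: L_def stirling_denom_Suc mult_ac)
  note R1 = this[unfolded telescope_term_mult_denom]
  have "b_summand M * L =
      (b_summand M * ((1 - of_nat (Suc M) * fps_X) * stirling_denom (Suc M))) *
      ((1 - fps_X) * (1 - of_nat (Suc (Suc M)) * fps_X))"
    by (simp only: L_def stirling_denom_Suc mult_ac)
  note A = this[unfolded b_summand_mult_denom]
  have "fps_binomial_transform (b_summand M) * L =
      (fps_binomial_transform (b_summand M) * ((1 - of_nat (Suc (Suc M)) * fps_X) * stirling_denom M)) *
      ((1 - fps_X) * (1 - of_nat (Suc M) * fps_X) * (1 + of_nat M * fps_X))"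
    by (simp only: L_def mult_ac)
  note T = this[unfolded binomial_transform_b_summand_mult_denom]
  have "(telescope_term M - telescope_term (Suc M)) * L =
      (4 * b_summand M - 2 * fps_X * b_summand M - fps_binomial_transform (b_summand M)) * L"
    unfolding left_diff_distrib mult.assoc[of _ _ L] R0 R1 A T
    by (simp add: algebra_simps)
  with \<open>L \<noteq> 0\<close> show ?thesis
    by simp
qed

lemma telescope_term_0_nth: "telescope_term 0 $ n = 3"
proof -
  have "(telescope_term 0 * (1 - fps_X)) * (1 - fps_X) = 3 * (1 - fps_X)"
    using telescope_term_mult_denom[of 0] by (simp add: stirling_denom_def algebra_simps)
  then have "telescope_term 0 * (1 - fps_X) = 3"
    using one_minus_fps_X_neq_0 by (metis mult_cancel_right)
  have "telescope_term 0 = telescope_term 0 * (1 - fps_X) * inverse (1 - fps_X)"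
    by (simp add: mult.assoc inverse_mult_eq_1')
  also have "\<dots> = 3 * inverse (1 - fps_X)"
    using \<open>telescope_term 0 * (1 - fps_X) = 3\<close> by simp
  finally have "telescope_term 0 = 3 * inverse (1 - fps_X)" .
  then show ?thesis
    by (simp add: numeral_fps_const fps_inverse_one_minus_X_nth)
qed

lemma telescope_term_nth_below:
  assumes "n < M"
  shows "telescope_term M $ n = 0"
proof -
  have "telescope_term M = fps_X ^ M * (fact M * (3 - (of_nat M + 3) * fps_X) *
      inverse ((1 - fps_X) * (1 - of_nat (Suc M) * fps_X) * stirling_denom M))"
    by (simp only: telescope_term_def mult_ac)
  with assms show ?thesis
    by (simp add: fps_X_power_mult_nth)
qed

lemma b_seq_Suc_binomial_identity:
  "4 * b_seq (Suc n) - 2 * b_seq n - (\<Sum>k=0..Suc n. of_nat (Suc n choose k) * b_seq k) = 3"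
proof -
  have "(\<Sum>m=0..Suc n. telescope_term m - telescope_term (Suc m)) $ Suc n = 3"
    by (simp add: atLeast0AtMost sum_telescope telescope_term_0_nth telescope_term_nth_below)
  then have "(\<Sum>m=0..Suc n. 4 * b_summand m $ Suc n - 2 * b_summand m $ n -
      fps_binomial_transform (b_summand m) $ Suc n) = 3"
    by (simp add: telescope_term_diff fps_sum_nth numeral_fps_const mult.assoc)
  moreover have "(\<Sum>m=0..Suc n. fps_binomial_transform (b_summand m) $ Suc n) =
      (\<Sum>k=0..Suc n. of_nat (Suc n choose k) * b_seq k)"
    unfolding fps_binomial_transform_nth sum.swap[of _ "{0..Suc n}"] sum_distrib_left[symmetric]
    by (intro sum.cong refl) (simp add: b_seq_eq_sum_b_summand)
  ultimately show ?thesis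
    by (simp add: sum_subtractf sum_distrib_left b_seq_eq_sum_b_summand[of _ "Suc n"])
qed

theorem proposition3p1:
  shows "b_seq 0 = 1 \<and>
    (\<forall>n. 3 * b_seq (n + 1) = 2 * b_seq n + (\<Sum>k=0..n. of_nat ((n + 1) choose k) * b_seq k) + 3)"
proof (intro conjI allI)
  show "b_seq 0 = 1"
    using b_seq_eq_sum_b_summand[of 0 0] by (simp add: b_summand_nth stirling_ogf_0)
  fix n
  show "3 * b_seq (n + 1) = 2 * b_seq n + (\<Sum>k=0..n. of_nat ((n + 1) choose k) * b_seq k) + 3"
    using b_seq_Suc_binomial_identity[of n] by (simp add: sum.atLeast0_atMost_Suc)
qed

end
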